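(* Let $M$ be a simply-connected domain in $\mathbb{R}^2(u,v)$, let $\omega,H,Q,R:M\to\mathbb{R}$ be smooth, and let $\Phi=(\Phi_1,\Phi_2)$ and $\Psi=(\Psi_1,\Psi_2)$, $M\to\mathrm{SL}_2\mathbb{R}\times\mathrm{SL}_2\mathbb{R}$, solve the Lax systems (L1) and (L2) below, respectively. Write $\Phi_1=\begin{pmatrix}\Phi_{11}&\Phi_{12}\\\Phi_{13}&\Phi_{14}\end{pmatrix}$, $\Phi_2=\begin{pmatrix}\Phi_{21}&\Phi_{22}\\\Phi_{23}&\Phi_{24}\end{pmatrix}$, and similarly for $\Psi$. Define the projected hyperbolic Gauss maps $G^+_\Phi=\big(\tfrac{\Phi_{11}}{\Phi_{13}},\tfrac{\Phi_{21}}{\Phi_{23}}\big)$, $G^-_\Phi=\big(\tfrac{\Phi_{12}}{\Phi_{14}},\tfrac{\Phi_{22}}{\Phi_{24}}\big)$, $G^+_\Psi=\big(\tfrac{\Psi_{11}}{\Psi_{13}},-\tfrac{\Psi_{24}}{\Psi_{22}}\big)$, $G^-_\Psi=\big(\tfrac{\Psi_{12}}{\Psi_{14}},-\tfrac{\Psi_{23}}{\Psi_{21}}\big)$, each considered on an open set $W\subset M$ where its denominators do not vanish. Then on such $W$: (1) $\partial_uG^+_\Phi\equiv0$ (resp. $\partial_uG^+_\Psi\equiv0$) iff $H\equiv1$ and $Q\equiv0$; (2) $\partial_vG^+_\Phi\equiv0$ (resp. $\partial_vG^+_\Psi\equiv0$) iff $H\equiv1$ and $R\equiv0$; (3) $\partial_uG^-_\Phi\equiv0$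 (resp. $\partial_uG^-_\Psi\equiv0$) iff $H\equiv-1$ and $Q\equiv0$; (4) $\partial_vG^-_\Phi\equiv0$ (resp. $\partial_vG^-_\Psi\equiv0$) iff $H\equiv-1$ and $R\equiv0$.
   Context: (L1): $(\Phi_1)_u=\Phi_1\mathcal U_1$, $(\Phi_1)_v=\Phi_1\mathcal V_1$, $(\Phi_2)_u=\Phi_2\mathcal U_2$, $(\Phi_2)_v=\Phi_2\mathcal V_2$ with $\mathcal U_1=\begin{pmatrix}\frac{\omega_u}{4}&\frac12e^{\omega/2}(H+1)\\-e^{-\omega/2}Q&-\frac{\omega_u}{4}\end{pmatrix}$, $\mathcal V_1=\begin{pmatrix}-\frac{\omega_v}{4}&e^{-\omega/2}R\\-\frac12e^{\omega/2}(H-1)&\frac{\omega_v}{4}\end{pmatrix}$, $\mathcal U_2=\begin{pmatrix}-\frac{\omega_u}{4}&e^{-\omega/2}Q\\-\frac12e^{\omega/2}(H-1)&\frac{\omega_u}{4}\end{pmatrix}$, $\mathcal V_2=\begin{pmatrix}\frac{\omega_v}{4}&\frac12e^{\omega/2}(H+1)\\-e^{-\omega/2}R&-\frac{\omega_v}{4}\end{pmatrix}$. (L2): $(\Psi_1)_u=\Psi_1\mathcal U_1$, $(\Psi_1)_v=\Psi_1\mathcal V_1$ (same $\mathcal U_1,\mathcal V_1$), $(\Psi_2)_u=\Psi_2\begin{pmatrix}\frac{\omega_u}{4}&\frac12e^{\omega/2}(H-1)\\-e^{-\omega/2}Q&-\frac{\omega_u}{4}\end{pmatrix}$, $(\Psi_2)_v=\Psi_2\begin{pmatrix}-\frac{\omega_v}{4}&e^{-\omega/2}R\\-\frac12e^{\omega/2}(H+1)&\frac{\omega_v}{4}\end{pmatrix}$.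 These are the frames of the timelike surfaces $\varphi=\Phi_1\Phi_2^t$ and $\psi=\Psi_1\Psi_2^{-1}$ in $\mathbb{H}^3_1(-1)\cong\mathrm{SL}_2\mathbb{R}$ with metric $e^\omega du\,dv$, mean curvature $H$ and Hopf pairs $Q,R$; $G^\pm$ are the images of the null lines $[\varphi\pm N]$ in $\mathbb{R}^2(u,v)$. A map with $\partial_u=0$ is called Lorentz antiholomorphic, with $\partial_v=0$ Lorentz holomorphic. *)

theory Defs
  imports "HOL-Analysis.Analysis"
begin

definition has_pd_u :: "(real \<times> real \<Rightarrow> 'a::real_normed_vector) \<Rightarrow> real \<times> real \<Rightarrow> 'a \<Rightarrow> bool" where
  "has_pd_u f p D \<longleftrightarrow> ((\<lambda>t. f (t, snd p)) has_vector_derivative D) (at (fst p))"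

definition has_pd_v :: "(real \<times> real \<Rightarrow> 'a::real_normed_vector) \<Rightarrow> real \<times> real \<Rightarrow> 'a \<Rightarrow> bool" where
  "has_pd_v f p D \<longleftrightarrow> ((\<lambda>t. f (fst p, t)) has_vector_derivative D) (at (snd p))"

coinductive smooth_on2 :: "(real \<times> real) set \<Rightarrow> (real \<times> real \<Rightarrow> real) \<Rightarrow> bool" where
  "\<lbrakk> continuous_on S f;
     \<forall>p\<in>S. has_pd_u f p (fu p); \<forall>p\<in>S. has_pd_v f p (fv p);
     smooth_on2 S fu; smooth_on2 S fv \<rbrakk> \<Longrightarrow> smooth_on2 S f"

definition mat2 :: "real \<Rightarrow> real \<Rightarrow> real \<Rightarrow> real \<Rightarrow> real^2^2" where
  "mat2 a b c d = (\<chi> i j. if i = 1 then (if j = 1 then a else b) else (if j = 1 then c else d))"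

text \<open>Entries: for X = ((X1 X2),(X3 X4)), X1 = X$1$1, X2 = X$1$2, X3 = X$2$1, X4 = X$2$2.\<close>

definition in_SL2 :: "real^2^2 \<Rightarrow> bool" where
  "in_SL2 X \<longleftrightarrow> det X = 1"

definition U1 :: "real \<Rightarrow> real \<Rightarrow> real \<Rightarrow> real \<Rightarrow> real^2^2" where
  "U1 w wu H Q = mat2 (wu/4) (exp (w/2) * (H+1) / 2) (- exp (-w/2) * Q) (- wu/4)"

definition V1 :: "real \<Rightarrow> real \<Rightarrow> real \<Rightarrow> real \<Rightarrow> real^2^2" where
  "V1 w wv H R = mat2 (- wv/4) (exp (-w/2) * R) (- exp (w/2) * (H-1) / 2) (wv/4)"

definition U2 :: "real \<Rightarrow> real \<Rightarrow> real \<Rightarrow> real \<Rightarrow> real^2^2" where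
  "U2 w wu H Q = mat2 (- wu/4) (exp (-w/2) * Q) (- exp (w/2) * (H-1) / 2) (wu/4)"

definition V2 :: "real \<Rightarrow> real \<Rightarrow> real \<Rightarrow> real \<Rightarrow> real^2^2" where
  "V2 w wv H R = mat2 (wv/4) (exp (w/2) * (H+1) / 2) (- exp (-w/2) * R) (- wv/4)"

definition U2' :: "real \<Rightarrow> real \<Rightarrow> real \<Rightarrow> real \<Rightarrow> real^2^2" where
  "U2' w wu H Q = mat2 (wu/4) (exp (w/2) * (H-1) / 2) (- exp (-w/2) * Q) (- wu/4)"

definition V2' :: "real \<Rightarrow> real \<Rightarrow> real \<Rightarrow> real \<Rightarrow> real^2^2" where
  "V2' w wv H R = mat2 (- wv/4) (exp (-w/2) * R) (- exp (w/2) * (H+1) / 2) (wv/4)"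

definition Gp_Phi :: "(real\<times>real \<Rightarrow> real^2^2) \<Rightarrow> (real\<times>real \<Rightarrow> real^2^2) \<Rightarrow> real\<times>real \<Rightarrow> real \<times> real" where
  "Gp_Phi P1 P2 p = (P1 p $1$1 / P1 p $2$1, P2 p $1$1 / P2 p $2$1)"

definition Gm_Phi :: "(real\<times>real \<Rightarrow> real^2^2) \<Rightarrow> (real\<times>real \<Rightarrow> real^2^2) \<Rightarrow> real\<times>real \<Rightarrow> real \<times> real" where
  "Gm_Phi P1 P2 p = (P1 p $1$2 / P1 p $2$2, P2 p $1$2 / P2 p $2$2)"

definition Gp_Psi :: "(real\<times>real \<Rightarrow> real^2^2) \<Rightarrow> (real\<times>real \<Rightarrow> real^2^2) \<Rightarrow> real\<times>real \<Rightarrow> real \<times> real" where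
  "Gp_Psi P1 P2 p = (P1 p $1$1 / P1 p $2$1, - (P2 p $2$2 / P2 p $1$2))"

definition Gm_Psi :: "(real\<times>real \<Rightarrow> real^2^2) \<Rightarrow> (real\<times>real \<Rightarrow> real^2^2) \<Rightarrow> real\<times>real \<Rightarrow> real \<times> real" where
  "Gm_Psi P1 P2 p = (P1 p $1$2 / P1 p $2$2, - (P2 p $2$1 / P2 p $1$1))"

end

theory Submission
  imports Defs
begin

text \<open>If a frame \<open>X\<close> with \<open>det X \<noteq> 0\<close> solves \<open>X' = X A\<close>, the quotient rule gives the
  derivative of the ratio \<open>X\<^sub>i\<^sub>j / X\<^sub>k\<^sub>j\<close> of two entries of column \<open>j\<close> as
  \<open>\<plusminus>det X \<cdot> A\<^sub>l\<^sub>j / X\<^sub>k\<^sub>j\<^sup>2\<close>, \<open>l\<close> being the other column: the contribution of \<open>A\<^sub>j\<^sub>j\<close> cancels.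
  Each component of the four Gauss maps is such a ratio, so it is constant in \<open>u\<close> (resp. \<open>v\<close>)
  exactly where one off-diagonal entry of the coefficient matrix of the \<open>u\<close>- (resp. \<open>v\<close>-)
  equation vanishes, and these entries are \<open>Q\<close>, \<open>R\<close>, \<open>H - 1\<close> or \<open>H + 1\<close> times a nowhere
  vanishing factor.\<close>

lemma column_cross_matrix_mult:
  fixes X A :: "real^2^2"
  assumes "i \<noteq> k" and "l \<noteq> j"
  shows "(X ** A)$i$j * X$k$j - X$i$j * (X ** A)$k$j = (X$i$l * X$k$j - X$i$j * X$k$l) * A$l$j"
proof -
  have "i = 1 \<and> k = 2 \<or> i = 2 \<and> k = 1" and "j = 1 \<and> l = 2 \<or> j = 2 \<and> l = 1"
    using assms exhaust_2[of i] exhaust_2[of k] exhaust_2[of j] exhaust_2[of l] by auto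
  then show ?thesis
    by (elim disjE conjE) (simp_all add: matrix_matrix_mult_def sum_2 algebra_simps)
qed

lemma abs_column_cross_eq_abs_det:
  fixes X :: "real^2^2"
  assumes "i \<noteq> k" and "l \<noteq> j"
  shows "\<bar>X$i$l * X$k$j - X$i$j * X$k$l\<bar> = \<bar>det X\<bar>"
proof -
  have "i = 1 \<and> k = 2 \<or> i = 2 \<and> k = 1" and "j = 1 \<and> l = 2 \<or> j = 2 \<and> l = 1"
    using assms exhaust_2[of i] exhaust_2[of k] exhaust_2[of j] exhaust_2[of l] by auto
  then show ?thesis
    by (elim disjE conjE) (simp_all add: det_2 abs_minus_commute mult.commute)
qed

lemma has_vector_derivative_matrix_entry:
  fixes X :: "real \<Rightarrow> real^'n^'m"
  assumes "(X has_vector_derivative D) F"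
  shows "((\<lambda>t. X t $ i $ j) has_vector_derivative D $ i $ j) F"
proof -
  have "bounded_linear (\<lambda>Y::real^'n^'m. Y $ i $ j)"
    by (rule bounded_linear_compose[OF bounded_linear_vec_nth bounded_linear_vec_nth])
  from bounded_linear.has_vector_derivative[OF this assms] show ?thesis .
qed

lemma column_ratio_has_vector_derivative_0_iff:
  fixes X :: "real \<Rightarrow> real^2^2"
  assumes X': "(X has_vector_derivative X t ** A) (at t)"
    and det: "det (X t) \<noteq> 0" and denom: "X t $k$j \<noteq> 0" and "i \<noteq> k" and "l \<noteq> j"
  shows "((\<lambda>s. X s$i$j / X s$k$j) has_vector_derivative 0) (at t) \<longleftrightarrow> A$l$j = 0"
proof -
  let ?c = "X t$i$l * X t$k$j - X t$i$j * X t$k$l"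
  have "((\<lambda>s. X s$i$j / X s$k$j) has_real_derivative
      ((X t ** A)$i$j * X t$k$j - X t$i$j * (X t ** A)$k$j) / (X t$k$j * X t$k$j)) (at t)"
    using has_vector_derivative_matrix_entry[OF X'] denom
    by (intro DERIV_divide) (simp_all add: has_real_derivative_iff_has_vector_derivative)
  then have "((\<lambda>s. X s$i$j / X s$k$j) has_vector_derivative ?c * A$l$j / (X t$k$j)\<^sup>2) (at t)"
    using assms
    by (simp add: column_cross_matrix_mult power2_eq_square has_real_derivative_iff_has_vector_derivative)
  then have "((\<lambda>s. X s$i$j / X s$k$j) has_vector_derivative 0) (at t) \<longleftrightarrow> ?c * A$l$j / (X t$k$j)\<^sup>2 = 0"
    by (auto dest: vector_derivative_unique_at)
  moreover have "?c \<noteq> 0"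
    using abs_column_cross_eq_abs_det[OF \<open>i \<noteq> k\<close> \<open>l \<noteq> j\<close>, of "X t"] det by auto
  ultimately show ?thesis
    using denom by simp
qed

lemma has_vector_derivative_Pair_iff:
  "((\<lambda>t. (f t, g t)) has_vector_derivative (f', g')) (at x within S) \<longleftrightarrow>
    (f has_vector_derivative f') (at x within S) \<and> (g has_vector_derivative g') (at x within S)"
proof
  assume "((\<lambda>t. (f t, g t)) has_vector_derivative (f', g')) (at x within S)"
  then show "(f has_vector_derivative f') (at x within S) \<and> (g has_vector_derivative g') (at x within S)"
    using bounded_linear.has_vector_derivative[OF bounded_linear_fst]
      bounded_linear.has_vector_derivative[OF bounded_linear_snd] by fastforce
qed (simp add: has_vector_derivative_Pair)

lemma has_vector_derivative_minus_iff:
  "((\<lambda>t. - f t) has_vector_derivative D) F \<longleftrightarrow> (f has_vector_derivative - D) F"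
  using has_vector_derivative_minus[of f "- D" F] has_vector_derivative_minus[of "\<lambda>t. - f t" D F]
  by auto

lemma has_pd_u_Pair_iff:
  "has_pd_u (\<lambda>q. (f q, g q)) p (f', g') \<longleftrightarrow> has_pd_u f p f' \<and> has_pd_u g p g'"
  by (simp add: has_pd_u_def has_vector_derivative_Pair_iff)

lemma has_pd_v_Pair_iff:
  "has_pd_v (\<lambda>q. (f q, g q)) p (f', g') \<longleftrightarrow> has_pd_v f p f' \<and> has_pd_v g p g'"
  by (simp add: has_pd_v_def has_vector_derivative_Pair_iff)

lemma has_pd_u_minus_iff: "has_pd_u (\<lambda>q. - f q) p D \<longleftrightarrow> has_pd_u f p (- D)"
  by (simp add: has_pd_u_def has_vector_derivative_minus_iff)

lemma has_pd_v_minus_iff: "has_pd_v (\<lambda>q. - f q) p D \<longleftrightarrow> has_pd_v f p (- D)"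
  by (simp add: has_pd_v_def has_vector_derivative_minus_iff)

lemma has_pd_u_column_ratio_0_iff:
  fixes P :: "real \<times> real \<Rightarrow> real^2^2"
  assumes "has_pd_u P p (P p ** A)" and "det (P p) \<noteq> 0" and "P p $k$j \<noteq> 0"
    and "i \<noteq> k" and "l \<noteq> j"
  shows "has_pd_u (\<lambda>q. P q$i$j / P q$k$j) p 0 \<longleftrightarrow> A$l$j = 0"
  using column_ratio_has_vector_derivative_0_iff[of "\<lambda>t. P (t, snd p)" "fst p" A] assms
  by (simp add: has_pd_u_def)

lemma has_pd_v_column_ratio_0_iff:
  fixes P :: "real \<times> real \<Rightarrow> real^2^2"
  assumes "has_pd_v P p (P p ** A)" and "det (P p) \<noteq> 0" and "P p $k$j \<noteq> 0"
    and "i \<noteq> k" and "l \<noteq> j"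
  shows "has_pd_v (\<lambda>q. P q$i$j / P q$k$j) p 0 \<longleftrightarrow> A$l$j = 0"
  using column_ratio_has_vector_derivative_0_iff[of "\<lambda>t. P (fst p, t)" "snd p" A] assms
  by (simp add: has_pd_v_def)

lemma Gauss_maps_Phi_pd_0_iff:
  fixes \<Phi>1 \<Phi>2 :: "real \<times> real \<Rightarrow> real^2^2"
  assumes "det (\<Phi>1 p) = 1" and "det (\<Phi>2 p) = 1"
    and "has_pd_u \<Phi>1 p (\<Phi>1 p ** U1 w wu h q)" and "has_pd_v \<Phi>1 p (\<Phi>1 p ** V1 w wv h r)"
    and "has_pd_u \<Phi>2 p (\<Phi>2 p ** U2 w wu h q)" and "has_pd_v \<Phi>2 p (\<Phi>2 p ** V2 w wv h r)"
  shows "\<Phi>1 p$2$1 \<noteq> 0 \<Longrightarrow> \<Phi>2 p$2$1 \<noteq> 0 \<Longrightarrow> has_pd_u (Gp_Phi \<Phi>1 \<Phi>2) p (0, 0) \<longleftrightarrow> h = 1 \<and> q = 0"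
    and "\<Phi>1 p$2$1 \<noteq> 0 \<Longrightarrow> \<Phi>2 p$2$1 \<noteq> 0 \<Longrightarrow> has_pd_v (Gp_Phi \<Phi>1 \<Phi>2) p (0, 0) \<longleftrightarrow> h = 1 \<and> r = 0"
    and "\<Phi>1 p$2$2 \<noteq> 0 \<Longrightarrow> \<Phi>2 p$2$2 \<noteq> 0 \<Longrightarrow> has_pd_u (Gm_Phi \<Phi>1 \<Phi>2) p (0, 0) \<longleftrightarrow> h = -1 \<and> q = 0"
    and "\<Phi>1 p$2$2 \<noteq> 0 \<Longrightarrow> \<Phi>2 p$2$2 \<noteq> 0 \<Longrightarrow> has_pd_v (Gm_Phi \<Phi>1 \<Phi>2) p (0, 0) \<longleftrightarrow> h = -1 \<and> r = 0"
  using assms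
  (* the index l of the other column is not determined by the rewritten ratio, so both
     instances are supplied and the simplifier keeps the one with l \<noteq> j *)
  by (simp_all add: Gp_Phi_def[abs_def] Gm_Phi_def[abs_def] has_pd_u_Pair_iff has_pd_v_Pair_iff
      has_pd_u_column_ratio_0_iff[where l=1] has_pd_u_column_ratio_0_iff[where l=2]
      has_pd_v_column_ratio_0_iff[where l=1] has_pd_v_column_ratio_0_iff[where l=2]
      U1_def V1_def U2_def V2_def mat2_def conj_commute eq_neg_iff_add_eq_0)

lemma Gauss_maps_Psi_pd_0_iff:
  fixes \<Psi>1 \<Psi>2 :: "real \<times> real \<Rightarrow> real^2^2"
  assumes "det (\<Psi>1 p) = 1" and "det (\<Psi>2 p) = 1"
    and "has_pd_u \<Psi>1 p (\<Psi>1 p ** U1 w wu h q)" and "has_pd_v \<Psi>1 p (\<Psi>1 p ** V1 w wv h r)"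
    and "has_pd_u \<Psi>2 p (\<Psi>2 p ** U2' w wu h q)" and "has_pd_v \<Psi>2 p (\<Psi>2 p ** V2' w wv h r)"
  shows "\<Psi>1 p$2$1 \<noteq> 0 \<Longrightarrow> \<Psi>2 p$1$2 \<noteq> 0 \<Longrightarrow> has_pd_u (Gp_Psi \<Psi>1 \<Psi>2) p (0, 0) \<longleftrightarrow> h = 1 \<and> q = 0"
    and "\<Psi>1 p$2$1 \<noteq> 0 \<Longrightarrow> \<Psi>2 p$1$2 \<noteq> 0 \<Longrightarrow> has_pd_v (Gp_Psi \<Psi>1 \<Psi>2) p (0, 0) \<longleftrightarrow> h = 1 \<and> r = 0"
    and "\<Psi>1 p$2$2 \<noteq> 0 \<Longrightarrow> \<Psi>2 p$1$1 \<noteq> 0 \<Longrightarrow> has_pd_u (Gm_Psi \<Psi>1 \<Psi>2) p (0, 0) \<longleftrightarrow> h = -1 \<and> q = 0"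
    and "\<Psi>1 p$2$2 \<noteq> 0 \<Longrightarrow> \<Psi>2 p$1$1 \<noteq> 0 \<Longrightarrow> has_pd_v (Gm_Psi \<Psi>1 \<Psi>2) p (0, 0) \<longleftrightarrow> h = -1 \<and> r = 0"
  using assms
  by (simp_all add: Gp_Psi_def[abs_def] Gm_Psi_def[abs_def] has_pd_u_Pair_iff has_pd_v_Pair_iff
      has_pd_u_minus_iff has_pd_v_minus_iff
      has_pd_u_column_ratio_0_iff[where l=1] has_pd_u_column_ratio_0_iff[where l=2]
      has_pd_v_column_ratio_0_iff[where l=1] has_pd_v_column_ratio_0_iff[where l=2]
      U1_def V1_def U2'_def V2'_def mat2_def conj_commute eq_neg_iff_add_eq_0)

theorem theorem13p1:
  fixes M :: "(real \<times> real) set"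
    and \<omega> H Q R \<omega>u \<omega>v :: "real \<times> real \<Rightarrow> real"
    and \<Phi>1 \<Phi>2 \<Psi>1 \<Psi>2 :: "real \<times> real \<Rightarrow> real^2^2"
  assumes M_open: "open M" and M_conn: "connected M" and M_sc: "simply_connected M"
    and sm: "smooth_on2 M \<omega>" "smooth_on2 M H" "smooth_on2 M Q" "smooth_on2 M R"
    and \<omega>_u: "\<forall>p\<in>M. has_pd_u \<omega> p (\<omega>u p)" and \<omega>_v: "\<forall>p\<in>M. has_pd_v \<omega> p (\<omega>v p)"
    and SL: "\<forall>p\<in>M. in_SL2 (\<Phi>1 p) \<and> in_SL2 (\<Phi>2 p) \<and> in_SL2 (\<Psi>1 p) \<and> in_SL2 (\<Psi>2 p)"
    and L1: "\<forall>p\<in>M. has_pd_u \<Phi>1 p (\<Phi>1 p ** U1 (\<omega> p) (\<omega>u p) (H p) (Q p))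
                 \<and> has_pd_v \<Phi>1 p (\<Phi>1 p ** V1 (\<omega> p) (\<omega>v p) (H p) (R p))
                 \<and> has_pd_u \<Phi>2 p (\<Phi>2 p ** U2 (\<omega> p) (\<omega>u p) (H p) (Q p))
                 \<and> has_pd_v \<Phi>2 p (\<Phi>2 p ** V2 (\<omega> p) (\<omega>v p) (H p) (R p))"
    and L2: "\<forall>p\<in>M. has_pd_u \<Psi>1 p (\<Psi>1 p ** U1 (\<omega> p) (\<omega>u p) (H p) (Q p))
                 \<and> has_pd_v \<Psi>1 p (\<Psi>1 p ** V1 (\<omega> p) (\<omega>v p) (H p) (R p))
                 \<and> has_pd_u \<Psi>2 p (\<Psi>2 p ** U2' (\<omega> p) (\<omega>u p) (H p) (Q p))
                 \<and> has_pd_v \<Psi>2 p (\<Psi>2 p ** V2' (\<omega> p) (\<omega>v p) (H p) (R p))"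
  shows
    "(\<forall>W. open W \<and> W \<subseteq> M \<and> (\<forall>p\<in>W. \<Phi>1 p $2$1 \<noteq> 0 \<and> \<Phi>2 p $2$1 \<noteq> 0) \<longrightarrow>
        (((\<forall>p\<in>W. has_pd_u (Gp_Phi \<Phi>1 \<Phi>2) p (0,0)) \<longleftrightarrow> (\<forall>p\<in>W. H p = 1 \<and> Q p = 0)) \<and>
         ((\<forall>p\<in>W. has_pd_v (Gp_Phi \<Phi>1 \<Phi>2) p (0,0)) \<longleftrightarrow> (\<forall>p\<in>W. H p = 1 \<and> R p = 0))))
   \<and> (\<forall>W. open W \<and> W \<subseteq> M \<and> (\<forall>p\<in>W. \<Phi>1 p $2$2 \<noteq> 0 \<and> \<Phi>2 p $2$2 \<noteq> 0) \<longrightarrow>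
        (((\<forall>p\<in>W. has_pd_u (Gm_Phi \<Phi>1 \<Phi>2) p (0,0)) \<longleftrightarrow> (\<forall>p\<in>W. H p = -1 \<and> Q p = 0)) \<and>
         ((\<forall>p\<in>W. has_pd_v (Gm_Phi \<Phi>1 \<Phi>2) p (0,0)) \<longleftrightarrow> (\<forall>p\<in>W. H p = -1 \<and> R p = 0))))
   \<and> (\<forall>W. open W \<and> W \<subseteq> M \<and> (\<forall>p\<in>W. \<Psi>1 p $2$1 \<noteq> 0 \<and> \<Psi>2 p $1$2 \<noteq> 0) \<longrightarrow>
        (((\<forall>p\<in>W. has_pd_u (Gp_Psi \<Psi>1 \<Psi>2) p (0,0)) \<longleftrightarrow> (\<forall>p\<in>W. H p = 1 \<and> Q p = 0)) \<and>
         ((\<forall>p\<in>W. has_pd_v (Gp_Psi \<Psi>1 \<Psi>2) p (0,0)) \<longleftrightarrow> (\<forall>p\<in>W. H p = 1 \<and> R p = 0))))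
   \<and> (\<forall>W. open W \<and> W \<subseteq> M \<and> (\<forall>p\<in>W. \<Psi>1 p $2$2 \<noteq> 0 \<and> \<Psi>2 p $1$1 \<noteq> 0) \<longrightarrow>
        (((\<forall>p\<in>W. has_pd_u (Gm_Psi \<Psi>1 \<Psi>2) p (0,0)) \<longleftrightarrow> (\<forall>p\<in>W. H p = -1 \<and> Q p = 0)) \<and>
         ((\<forall>p\<in>W. has_pd_v (Gm_Psi \<Psi>1 \<Psi>2) p (0,0)) \<longleftrightarrow> (\<forall>p\<in>W. H p = -1 \<and> R p = 0))))"
proof -
  have Gp_Phi_pd_0_iff: "(has_pd_u (Gp_Phi \<Phi>1 \<Phi>2) p (0, 0) \<longleftrightarrow> H p = 1 \<and> Q p = 0) \<and>
      (has_pd_v (Gp_Phi \<Phi>1 \<Phi>2) p (0, 0) \<longleftrightarrow> H p = 1 \<and> R p = 0)"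
    if "p \<in> M" and "\<Phi>1 p $2$1 \<noteq> 0" and "\<Phi>2 p $2$1 \<noteq> 0" for p
    using SL[rule_format, OF \<open>p \<in> M\<close>] L1[rule_format, OF \<open>p \<in> M\<close>] that
    by (auto simp: in_SL2_def Gauss_maps_Phi_pd_0_iff)
  have Gm_Phi_pd_0_iff: "(has_pd_u (Gm_Phi \<Phi>1 \<Phi>2) p (0, 0) \<longleftrightarrow> H p = -1 \<and> Q p = 0) \<and>
      (has_pd_v (Gm_Phi \<Phi>1 \<Phi>2) p (0, 0) \<longleftrightarrow> H p = -1 \<and> R p = 0)"
    if "p \<in> M" and "\<Phi>1 p $2$2 \<noteq> 0" and "\<Phi>2 p $2$2 \<noteq> 0" for p
    using SL[rule_format, OF \<open>p \<in> M\<close>] L1[rule_format, OF \<open>p \<in> M\<close>] that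
    by (auto simp: in_SL2_def Gauss_maps_Phi_pd_0_iff)
  have Gp_Psi_pd_0_iff: "(has_pd_u (Gp_Psi \<Psi>1 \<Psi>2) p (0, 0) \<longleftrightarrow> H p = 1 \<and> Q p = 0) \<and>
      (has_pd_v (Gp_Psi \<Psi>1 \<Psi>2) p (0, 0) \<longleftrightarrow> H p = 1 \<and> R p = 0)"
    if "p \<in> M" and "\<Psi>1 p $2$1 \<noteq> 0" and "\<Psi>2 p $1$2 \<noteq> 0" for p
    using SL[rule_format, OF \<open>p \<in> M\<close>] L2[rule_format, OF \<open>p \<in> M\<close>] that
    by (auto simp: in_SL2_def Gauss_maps_Psi_pd_0_iff)
  have Gm_Psi_pd_0_iff: "(has_pd_u (Gm_Psi \<Psi>1 \<Psi>2) p (0, 0) \<longleftrightarrow> H p = -1 \<and> Q p = 0) \<and>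
      (has_pd_v (Gm_Psi \<Psi>1 \<Psi>2) p (0, 0) \<longleftrightarrow> H p = -1 \<and> R p = 0)"
    if "p \<in> M" and "\<Psi>1 p $2$2 \<noteq> 0" and "\<Psi>2 p $1$1 \<noteq> 0" for p
    using SL[rule_format, OF \<open>p \<in> M\<close>] L2[rule_format, OF \<open>p \<in> M\<close>] that
    by (auto simp: in_SL2_def Gauss_maps_Psi_pd_0_iff)
  show ?thesis
    using Gp_Phi_pd_0_iff Gm_Phi_pd_0_iff Gp_Psi_pd_0_iff Gm_Psi_pd_0_iff by (meson subsetD)
qed

end
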